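(* Let $T\subseteq P_{2n}$ be transitive and closed under reversal. Then: 1. $(i,j)\in T$ implies $S_{2n,i,j}\in B_{2n}(T)$. 2. If $i\in[2n]$ and $v\in\mathbb{F}^{2n}$ is supported on $\{j:(j,i)\in T\}$, then $S_{2n,v,i}\in B_{2n}(T)$. 3. The set $\{S_{2n,i,j}: j\in[n],\ j+1\le i\le 2n+1-j,\ (i,j)\in T\}$ generates $B_{2n}(T)$. 4. Every $B\in B_{2n}(T)$ satisfies $B=S_{2n,V_n(B)e_{n,1},1}\cdots S_{2n,V_n(B)e_{n,n},n}$, and each factor $S_{2n,V_n(B)e_{n,j},j}$ lies in $B_{2n}(T)$ and is a product of generators from part 3; this gives a canonical expression of each element of $B_{2n}(T)$ in terms of these generators.
   Context: $\mathbb{F}$ is the field with two elements, $e_{N,i}$ standard basis column vectors, $I_N$ the identity, $[N]=\{1,\dots,N\}$. $R_{2n}=\sum_{i=1}^{2n}e_{2n,i}e_{2n,2n+1-i}^{\top}$; $\mathrm{Sp}_{2n}=\{C:C^{\top}R_{2n}C=R_{2n}\}$. $P_{2n}=\{(i,j):i,j\in[2n],i>j\}$. $T\subseteq P_{2n}$ is transitive if $(i,j),(j,k)\in T\Rightarrow(i,k)\in T$, and closed under reversal if $(i,j)\in T\iff(2n+1-j,2n+1-i)\in T$. $B_{2n}(T)=\big(I_{2n}+\mathrm{span}_{\mathbb{F}}\{e_{2n,i}e_{2n,j}^{\top}:(i,j)\in T\}\big)\cap\mathrm{Sp}_{2n}$. For $i\ne j\in[2n]$: $S_{2n,i,j}=I_{2n}+e_{2n,i}e_{2n,j}^{\top}$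 if $i+j=2n+1$, else $S_{2n,i,j}=I_{2n}+e_{2n,i}e_{2n,j}^{\top}+e_{2n,2n+1-j}e_{2n,2n+1-i}^{\top}$. For $v\in\mathbb{F}^{2n}$ with $v_i=0$: $S_{2n,v,i}=I_{2n}+ve_{2n,i}^{\top}+R_{2n}e_{2n,i}v^{\top}R_{2n}+v_{2n+1-i}e_{2n,2n+1-i}e_{2n,i}^{\top}$. $V_n(B)=\sum_{j=1}^n\sum_{i=j+1}^{2n+1-j}e_{2n,i}e_{2n,i}^{\top}Be_{2n,j}e_{n,j}^{\top}$. *)

theory Defs
  imports "HOL-Library.Z2" "Jordan_Normal_Form.Matrix"
begin

text \<open>The field F with two elements is the type bit (HOL-Library.Z2).
  Matrices are Jordan_Normal_Form matrices (0-based internally); all definitions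
  below take 1-based paper indices and translate them.\<close>

definition ev :: "nat \<Rightarrow> nat \<Rightarrow> bit vec" where
  "ev N i = unit_vec N (i - 1)"

definition outer :: "bit vec \<Rightarrow> bit vec \<Rightarrow> bit mat" where
  "outer u w = mat (dim_vec u) (dim_vec w) (\<lambda>(a, b). u $ a * w $ b)"

definition E :: "nat \<Rightarrow> nat \<Rightarrow> nat \<Rightarrow> bit mat" where
  "E N i j = outer (ev N i) (ev N j)"

definition R :: "nat \<Rightarrow> bit mat" where
  "R n = mat (2*n) (2*n) (\<lambda>(a, b). if (a + 1) + (b + 1) = 2*n + 1 then 1 else 0)"

definition Sp :: "nat \<Rightarrow> bit mat set" where
  "Sp n = {C \<in> carrier_mat (2*n) (2*n). transpose_mat C * R n * C = R n}"

definition P :: "nat \<Rightarrow> (nat \<times> nat) set" where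
  "P n = {(i, j). i \<in> {1..2*n} \<and> j \<in> {1..2*n} \<and> i > j}"

definition transitive_rel :: "(nat \<times> nat) set \<Rightarrow> bool" where
  "transitive_rel T \<longleftrightarrow> (\<forall>i j k. (i, j) \<in> T \<longrightarrow> (j, k) \<in> T \<longrightarrow> (i, k) \<in> T)"

definition reversal_closed :: "nat \<Rightarrow> (nat \<times> nat) set \<Rightarrow> bool" where
  "reversal_closed n T \<longleftrightarrow> (\<forall>i j. (i, j) \<in> T \<longleftrightarrow> (2*n + 1 - j, 2*n + 1 - i) \<in> T)"

text \<open>B_{2n}(T) = (I + span{E_{ij} : (i,j) in T}) \<inter> Sp_{2n}.  Over F the span
  consists of the sums of subsets of the matrix units.\<close>
definition Bgrp :: "nat \<Rightarrow> (nat \<times> nat) set \<Rightarrow> bit mat set" where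
  "Bgrp n T = {C \<in> Sp n. \<exists>c :: nat \<times> nat \<Rightarrow> bit.
      C = mat (2*n) (2*n) (\<lambda>(a, b). (if a = b then 1 else 0) +
            (if (a + 1, b + 1) \<in> T then c (a + 1, b + 1) else 0))}"

definition S :: "nat \<Rightarrow> nat \<Rightarrow> nat \<Rightarrow> bit mat" where
  "S n i j = (if i + j = 2*n + 1 then 1\<^sub>m (2*n) + E (2*n) i j
              else 1\<^sub>m (2*n) + E (2*n) i j + E (2*n) (2*n + 1 - j) (2*n + 1 - i))"

text \<open>S_{2n,v,i} (v given as a vector of dimension 2n; v_k is v $ (k-1)).\<close>
definition Sv :: "nat \<Rightarrow> bit vec \<Rightarrow> nat \<Rightarrow> bit mat" where
  "Sv n v i = 1\<^sub>m (2*n) + outer v (ev (2*n) i)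
      + R n * outer (ev (2*n) i) v * R n
      + (v $ (2*n + 1 - i - 1)) \<cdot>\<^sub>m E (2*n) (2*n + 1 - i) i"

definition V :: "nat \<Rightarrow> bit mat \<Rightarrow> bit mat" where
  "V n B = mat (2*n) n (\<lambda>(a, b). if b + 1 + 1 \<le> a + 1 \<and> a + 1 \<le> 2*n + 1 - (b + 1)
                                  then B $$ (a, b) else 0)"

definition prodm :: "nat \<Rightarrow> bit mat list \<Rightarrow> bit mat" where
  "prodm N As = foldr (\<lambda>A C. A * C) As (1\<^sub>m N)"

definition Gens :: "nat \<Rightarrow> (nat \<times> nat) set \<Rightarrow> bit mat set" where
  "Gens n T = {S n i j | i j. j \<in> {1..n} \<and> j + 1 \<le> i \<and> i \<le> 2*n + 1 - j \<and> (i, j) \<in> T}"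

inductive_set gen_group :: "nat \<Rightarrow> bit mat set \<Rightarrow> bit mat set" for N G where
  one: "1\<^sub>m N \<in> gen_group N G"
| gen: "g \<in> G \<Longrightarrow> g \<in> gen_group N G"
| mult: "A \<in> gen_group N G \<Longrightarrow> C \<in> gen_group N G \<Longrightarrow> A * C \<in> gen_group N G"
| inv: "A \<in> gen_group N G \<Longrightarrow> A' \<in> carrier_mat N N \<Longrightarrow> A * A' = 1\<^sub>m N
        \<Longrightarrow> A' \<in> gen_group N G"

end

theory Submission
  imports Defs
begin

text \<open>An element \<open>B\<close> of \<open>B_2n(T)\<close> is a symplectic lower unitriangular matrix with \<open>B - I\<close>
  supported on \<open>T\<close>. Transitivity of \<open>T\<close> makes this support condition closed under products,
  and reversal closure makes it hold for the involutions \<open>S_{v,i}\<close>, which satisfy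
  \<open>S\<^sup>T = R S R\<close>. For fixed \<open>j\<close> these multiply like a Heisenberg group,
  \<open>S_{w,j} S_{u,j} = S_{w + u + (w\<^sup>T R u) e, j}\<close> with \<open>e = e_{2n+1-j}\<close>, so \<open>S_{v,j}\<close> is a
  product of the generators \<open>S_{i,j}\<close> for \<open>i\<close> in the support of \<open>v\<close>, together with
  \<open>S_{2n+1-j,j}\<close> to absorb the correction term. The factorisation is column reduction: if the
  first \<open>j - 1\<close> columns of \<open>B\<close> are those of \<open>I\<close>, then column \<open>j\<close> is \<open>e_j + V_n(B) e_j\<close>, and
  multiplying by the involution \<open>S_{V_n(B) e_j, j}\<close> clears it without changing the later
  columns of \<open>V_n(B)\<close>; a symplectic unitriangular matrix whose first \<open>n\<close> columns are those of
  \<open>I\<close> is \<open>I\<close>. Finally, products of the involutive generators are closed under inversion,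
  which identifies the generated group with \<open>B_2n(T)\<close>.\<close>

declare add_bit_eq_xor [simp del] mult_bit_eq_and [simp del]

lemma bit_add_self [simp]: "(x::bit) + x = 0"
  by (cases x) simp_all

lemma bit_add_cancel_left [simp]: "(x::bit) + (x + y) = y"
  by (cases x; cases y) simp_all

lemma mult_carrier_mat_square [simp]:
  "A \<in> carrier_mat N N \<Longrightarrow> B \<in> carrier_mat N N \<Longrightarrow> A * B \<in> carrier_mat N N"
  by (rule mult_carrier_mat)

lemma dim_ev [simp]: "dim_vec (ev N i) = N"
  by (simp add: ev_def)

lemma ev_carrier_vec [simp]: "ev N i \<in> carrier_vec N"
  by (simp add: ev_def)

lemma index_ev: "x < N \<Longrightarrow> ev N i $ x = (if x = i - 1 then 1 else 0)"
  by (simp add: ev_def unit_vec_def)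

lemma dim_outer [simp]: "dim_row (outer u w) = dim_vec u" "dim_col (outer u w) = dim_vec w"
  by (simp_all add: outer_def)

lemma index_outer: "a < dim_vec u \<Longrightarrow> b < dim_vec w \<Longrightarrow> outer u w $$ (a, b) = u $ a * w $ b"
  by (simp add: outer_def)

lemma dim_E [simp]: "dim_row (E N i j) = N" "dim_col (E N i j) = N"
  by (simp_all add: E_def)

lemma index_E: "a < N \<Longrightarrow> b < N \<Longrightarrow> E N i j $$ (a, b) = (if a = i - 1 \<and> b = j - 1 then 1 else 0)"
  by (simp add: E_def index_outer index_ev)

lemma R_carrier_mat [simp]: "R n \<in> carrier_mat (2*n) (2*n)"
  by (simp add: R_def)

lemma dim_R [simp]: "dim_row (R n) = 2*n" "dim_col (R n) = 2*n"
  by (simp_all add: R_def)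

lemma index_R: "a < 2*n \<Longrightarrow> b < 2*n \<Longrightarrow> R n $$ (a, b) = (if a + b = 2*n - 1 then 1 else 0)"
  by (auto simp add: R_def)

lemma index_R_mult:
  assumes "A \<in> carrier_mat (2*n) m" "a < 2*n" "c < m"
  shows "(R n * A) $$ (a, c) = A $$ (2*n - 1 - a, c)"
proof -
  have "(R n * A) $$ (a, c) = (\<Sum>i\<in>{0..<2*n}. R n $$ (a, i) * A $$ (i, c))"
    using assms by (simp add: scalar_prod_def)
  also have "\<dots> = (\<Sum>i\<in>{0..<2*n}. if 2*n - 1 - a = i then A $$ (i, c) else 0)"
    using assms by (intro sum.cong) (auto simp: index_R)
  finally show ?thesis using assms by simp
qed

lemma index_mult_R:
  assumes "A \<in> carrier_mat m (2*n)" "a < m" "c < 2*n"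
  shows "(A * R n) $$ (a, c) = A $$ (a, 2*n - 1 - c)"
proof -
  have "(A * R n) $$ (a, c) = (\<Sum>i\<in>{0..<2*n}. A $$ (a, i) * R n $$ (i, c))"
    using assms by (simp add: scalar_prod_def)
  also have "\<dots> = (\<Sum>i\<in>{0..<2*n}. if 2*n - 1 - c = i then A $$ (a, i) else 0)"
    using assms by (intro sum.cong) (auto simp: index_R)
  finally show ?thesis using assms by simp
qed

lemma R_mult_R: "R n * R n = 1\<^sub>m (2*n)"
proof (rule eq_matI)
  fix a c assume "a < dim_row (1\<^sub>m (2*n))" "c < dim_col (1\<^sub>m (2*n))"
  then show "(R n * R n) $$ (a, c) = 1\<^sub>m (2*n) $$ (a, c)"
    by (auto simp: index_R_mult[OF R_carrier_mat] index_R simp del: index_mult_mat)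
qed auto

section \<open>The matrices \<open>S_{v,i}\<close> and the symplectic form\<close>

text \<open>The form \<open>u\<^sup>T R w\<close> preserved by \<open>Sp n\<close>.\<close>

definition symp :: "nat \<Rightarrow> bit vec \<Rightarrow> bit vec \<Rightarrow> bit" where
  "symp n u w = (\<Sum>b\<in>{0..<2*n}. u $ (2*n - 1 - b) * w $ b)"

text \<open>In characteristic 2 the form is alternating: the terms for \<open>b\<close> and \<open>2n-1-b\<close> cancel.\<close>

lemma symp_self [simp]: "symp n v v = 0"
proof -
  let ?g = "\<lambda>b. v $ (2*n - 1 - b) * v $ b"
  have "(\<Sum>b\<in>{n..<2*n}. ?g b) = (\<Sum>b\<in>{0..<n}. ?g (2*n - 1 - b))"
    by (rule sum.reindex_bij_witness[of _ "\<lambda>b. 2*n - 1 - b" "\<lambda>b. 2*n - 1 - b"]) auto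
  also have "\<dots> = (\<Sum>b\<in>{0..<n}. ?g b)"
    by (intro sum.cong) (auto simp: mult.commute)
  finally have "(\<Sum>b\<in>{n..<2*n}. ?g b) = (\<Sum>b\<in>{0..<n}. ?g b)" .
  moreover have "(\<Sum>b\<in>{0..<2*n}. ?g b) = (\<Sum>b\<in>{0..<n}. ?g b) + (\<Sum>b\<in>{n..<2*n}. ?g b)"
    by (rule sum.atLeastLessThan_concat[symmetric]) simp_all
  ultimately show ?thesis by (simp add: symp_def)
qed

lemma symp_ev:
  assumes "k < 2*n" shows "symp n w (ev (2*n) (k + 1)) = w $ (2*n - 1 - k)"
proof -
  have "symp n w (ev (2*n) (k + 1)) = (\<Sum>b\<in>{0..<2*n}. if b = k then w $ (2*n - 1 - b) else 0)"
    unfolding symp_def by (intro sum.cong) (auto simp: index_ev)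
  then show ?thesis using assms by simp
qed

lemma symp_add_right:
  assumes "w \<in> carrier_vec (2*n)" "w' \<in> carrier_vec (2*n)"
  shows "symp n u (w + w') = symp n u w + symp n u w'"
  unfolding symp_def using assms by (simp add: distrib_left sum.distrib)

lemma Sv_carrier_mat [simp]: "v \<in> carrier_vec (2*n) \<Longrightarrow> Sv n v i \<in> carrier_mat (2*n) (2*n)"
  unfolding Sv_def by auto

lemma dim_Sv [simp]: "dim_row (Sv n v i) = 2*n" "dim_col (Sv n v i) = 2*n"
  by (simp_all add: Sv_def)

lemma index_Sv:
  assumes v: "v \<in> carrier_vec (2*n)" and a: "a < 2*n" and b: "b < 2*n" and i: "i \<in> {1..2*n}"
  shows "Sv n v i $$ (a, b) = (if a = b then 1 else 0) + (if b = i - 1 then v $ a else 0)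
     + (if a = 2*n - i then v $ (2*n - 1 - b) else 0)
     + (if a = 2*n - i \<and> b = i - 1 then v $ (2*n - i) else 0)"
proof -
  have O: "outer (ev (2*n) i) v \<in> carrier_mat (2*n) (2*n)"
    using v by (simp add: outer_def)
  then have RO: "R n * outer (ev (2*n) i) v \<in> carrier_mat (2*n) (2*n)"
    by (metis R_carrier_mat mult_carrier_mat)
  have "(R n * outer (ev (2*n) i) v * R n) $$ (a, b)
      = outer (ev (2*n) i) v $$ (2*n - 1 - a, 2*n - 1 - b)"
    using a b by (simp add: index_mult_R[OF RO] index_R_mult[OF O] del: index_mult_mat)
  also have "\<dots> = (if a = 2*n - i then v $ (2*n - 1 - b) else 0)"
    using v a b i by (auto simp: index_outer index_ev)
  finally show ?thesis
    using v a b O unfolding Sv_def by (simp add: index_outer index_ev index_E)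
qed

lemma Sv_zero: "j \<in> {1..2*n} \<Longrightarrow> Sv n (0\<^sub>v (2*n)) j = 1\<^sub>m (2*n)"
  by (rule eq_matI) (auto simp: index_Sv)

lemma index_Sv_row:
  assumes u: "u \<in> carrier_vec (2*n)" and j: "j \<in> {1..2*n}" and uj: "u $ (j - 1) = 0"
    and c: "c < 2*n"
  shows "Sv n u j $$ (j - 1, c) = (if j - 1 = c then 1 else 0)"
proof -
  have "j - 1 < 2*n" "j - 1 \<noteq> 2*n - j" using j by auto presburger
  then show ?thesis using u j c uj by (simp add: index_Sv)
qed

lemma index_Sv_mult:
  assumes v: "v \<in> carrier_vec (2*n)" and X: "X \<in> carrier_mat (2*n) m"
    and a: "a < 2*n" and c: "c < m" and i: "i \<in> {1..2*n}"
  shows "(Sv n v i * X) $$ (a, c) = X $$ (a, c) + v $ a * X $$ (i - 1, c)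
    + (if a = 2*n - i then symp n v (col X c) + v $ (2*n - i) * X $$ (i - 1, c) else 0)"
proof -
  have "(Sv n v i * X) $$ (a, c) = (\<Sum>b\<in>{0..<2*n}. Sv n v i $$ (a, b) * X $$ (b, c))"
    using X a c by (simp add: scalar_prod_def)
  also have "\<dots> = (\<Sum>b\<in>{0..<2*n}. (if a = b then X $$ (b, c) else 0)
      + (if b = i - 1 then v $ a * X $$ (b, c) else 0)
      + (if a = 2*n - i then v $ (2*n - 1 - b) * col X c $ b else 0)
      + (if a = 2*n - i \<and> b = i - 1 then v $ (2*n - i) * X $$ (b, c) else 0))"
    using assms by (intro sum.cong) (auto simp: index_Sv distrib_right)
  also have "\<dots> = X $$ (a, c) + v $ a * X $$ (i - 1, c)
    + (if a = 2*n - i then symp n v (col X c) + v $ (2*n - i) * X $$ (i - 1, c) else 0)"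
    using a i by (cases "a = 2*n - i") (auto simp add: sum.distrib symp_def)
  finally show ?thesis .
qed

lemma symp_col_Sv:
  assumes w: "w \<in> carrier_vec (2*n)" and u: "u \<in> carrier_vec (2*n)"
    and j: "j \<in> {1..2*n}" and wj: "w $ (j - 1) = 0" and c: "c < 2*n"
  shows "symp n w (col (Sv n u j) c) = w $ (2*n - 1 - c) + (if c = j - 1 then symp n w u else 0)"
proof -
  have p: "2*n - j < 2*n" "2*n - 1 - (2*n - j) = j - 1" using j by auto
  have "symp n w (col (Sv n u j) c) = (\<Sum>b\<in>{0..<2*n}. (if b = c then w $ (2*n - 1 - b) else 0)
      + (if c = j - 1 then w $ (2*n - 1 - b) * u $ b else 0)
      + (if b = 2*n - j then w $ (2*n - 1 - b) * u $ (2*n - 1 - c) else 0)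
      + (if b = 2*n - j \<and> c = j - 1 then w $ (2*n - 1 - b) * u $ (2*n - j) else 0))"
    unfolding symp_def using u j c by (intro sum.cong) (auto simp: index_Sv distrib_left)
  also have "\<dots> = w $ (2*n - 1 - c) + (if c = j - 1 then symp n w u else 0)"
    using c p wj by (cases "c = j - 1") (simp_all add: sum.distrib symp_def)
  finally show ?thesis .
qed

lemma Sv_mult_Sv:
  assumes w: "w \<in> carrier_vec (2*n)" and u: "u \<in> carrier_vec (2*n)" and x: "x \<in> carrier_vec (2*n)"
    and j: "j \<in> {1..2*n}" and wj: "w $ (j - 1) = 0" and uj: "u $ (j - 1) = 0"
    and x_eq: "\<And>a. a < 2*n \<Longrightarrow> x $ a = w $ a + u $ a + (if a = 2*n - j then symp n w u else 0)"
  shows "Sv n w j * Sv n u j = Sv n x j"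
proof (rule eq_matI)
  fix a c assume "a < dim_row (Sv n x j)" "c < dim_col (Sv n x j)"
  then have a: "a < 2*n" and c: "c < 2*n" by auto
  have p: "2*n - j < 2*n" "2*n - 1 - c < 2*n" and e: "(2*n - 1 - c = 2*n - j) = (c = j - 1)"
    using c j by auto
  have "(Sv n w j * Sv n u j) $$ (a, c) = Sv n u j $$ (a, c) + w $ a * (if j - 1 = c then 1 else 0)
    + (if a = 2*n - j then w $ (2*n - 1 - c) + (if c = j - 1 then symp n w u else 0)
         + w $ (2*n - j) * (if j - 1 = c then 1 else 0) else 0)"
    using index_Sv_mult[OF w Sv_carrier_mat[OF u] a c j]
    by (simp only: index_Sv_row[OF u j uj c] symp_col_Sv[OF w u j wj c])
  also have "\<dots> = Sv n x j $$ (a, c)"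
    unfolding index_Sv[OF u a c j] index_Sv[OF x a c j] x_eq[OF a] x_eq[OF p(1)] x_eq[OF p(2)] e
    by (cases "c = j - 1"; cases "a = 2*n - j"; simp add: add_ac)
  finally show "(Sv n w j * Sv n u j) $$ (a, c) = Sv n x j $$ (a, c)" .
qed (use w in auto)

lemma Sv_involution:
  assumes v: "v \<in> carrier_vec (2*n)" and j: "j \<in> {1..2*n}" and vj: "v $ (j - 1) = 0"
  shows "Sv n v j * Sv n v j = 1\<^sub>m (2*n)"
proof -
  have "Sv n v j * Sv n v j = Sv n (0\<^sub>v (2*n)) j"
    by (rule Sv_mult_Sv[OF v v zero_carrier_vec j vj vj]) simp
  then show ?thesis using Sv_zero[OF j] by simp
qed

lemma Sv_transpose:
  assumes v: "v \<in> carrier_vec (2*n)" and i: "i \<in> {1..2*n}"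
  shows "transpose_mat (Sv n v i) = R n * Sv n v i * R n"
proof (rule eq_matI)
  fix a b assume "a < dim_row (R n * Sv n v i * R n)" "b < dim_col (R n * Sv n v i * R n)"
  then have a: "a < 2*n" and b: "b < 2*n" by auto
  have C: "R n * Sv n v i \<in> carrier_mat (2*n) (2*n)"
    using v by (metis R_carrier_mat Sv_carrier_mat mult_carrier_mat)
  have e: "(2*n - 1 - a = 2*n - 1 - b) = (b = a)" "(2*n - 1 - b = i - 1) = (b = 2*n - i)"
    "(2*n - 1 - a = 2*n - i) = (a = i - 1)" "2*n - 1 - (2*n - 1 - b) = b"
    using a b i by auto
  have r: "2*n - 1 - a < 2*n" "2*n - 1 - b < 2*n" using a b by auto
  have "(R n * Sv n v i * R n) $$ (a, b) = Sv n v i $$ (2*n - 1 - a, 2*n - 1 - b)"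
    using a b v
    by (simp add: index_mult_R[OF C] index_R_mult[OF Sv_carrier_mat[OF v]] del: index_mult_mat)
  also have "\<dots> = (if b = a then 1 else 0) + (if b = 2*n - i then v $ (2*n - 1 - a) else 0)
      + (if a = i - 1 then v $ b else 0) + (if b = 2*n - i \<and> a = i - 1 then v $ (2*n - i) else 0)"
    by (simp only: index_Sv[OF v r i] e conj_commute)
  also have "\<dots> = Sv n v i $$ (b, a)"
    by (simp add: index_Sv[OF v b a i] add_ac)
  finally show "transpose_mat (Sv n v i) $$ (a, b) = (R n * Sv n v i * R n) $$ (a, b)"
    using a b v by simp
qed (use v in auto)

lemma one_Sp: "1\<^sub>m (2*n) \<in> Sp n"
  unfolding Sp_def by simp

lemma mult_Sp:
  assumes A: "A \<in> Sp n" and B: "B \<in> Sp n" shows "A * B \<in> Sp n"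
proof -
  have Ac: "A \<in> carrier_mat (2*n) (2*n)" and Ae: "transpose_mat A * R n * A = R n"
    and Bc: "B \<in> carrier_mat (2*n) (2*n)" and Be: "transpose_mat B * R n * B = R n"
    using A B by (auto simp: Sp_def)
  have "transpose_mat (A * B) * R n * (A * B) = transpose_mat B * (transpose_mat A * R n * A) * B"
    using Ac Bc by (simp add: transpose_mult assoc_mult_mat[of _ "2*n" "2*n" _ "2*n" _ "2*n"])
  also have "\<dots> = R n" using Ae Be by simp
  finally show ?thesis using Ac Bc by (simp add: Sp_def)
qed

lemma Sv_Sp:
  assumes v: "v \<in> carrier_vec (2*n)" and i: "i \<in> {1..2*n}" and vi: "v $ (i - 1) = 0"
  shows "Sv n v i \<in> Sp n"
proof -
  have C: "Sv n v i \<in> carrier_mat (2*n) (2*n)" using v by simp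
  have "transpose_mat (Sv n v i) * R n * Sv n v i = R n * Sv n v i * (R n * R n) * Sv n v i"
    using C by (simp add: Sv_transpose[OF v i] assoc_mult_mat[of _ "2*n" "2*n" _ "2*n" _ "2*n"])
  also have "\<dots> = R n * (Sv n v i * Sv n v i)"
    using C by (simp add: R_mult_R assoc_mult_mat[of _ "2*n" "2*n" _ "2*n" _ "2*n"])
  finally show ?thesis
    using C by (simp add: Sp_def Sv_involution[OF v i vi])
qed

lemma Sp_symp_cols:
  assumes C: "C \<in> Sp n" and a: "a < 2*n" and b: "b < 2*n"
  shows "symp n (col C a) (col C b) = (if a + b = 2*n - 1 then 1 else 0)"
proof -
  have Cc: "C \<in> carrier_mat (2*n) (2*n)" and Ce: "transpose_mat C * R n * C = R n"
    using C by (auto simp: Sp_def)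
  have tC: "transpose_mat C * R n \<in> carrier_mat (2*n) (2*n)" using Cc by auto
  have "R n $$ (a, b) = (transpose_mat C * R n * C) $$ (a, b)" using Ce by simp
  also have "\<dots> = (\<Sum>y\<in>{0..<2*n}. (transpose_mat C * R n) $$ (a, y) * C $$ (y, b))"
    using tC Cc a b by (simp add: scalar_prod_def)
  also have "\<dots> = symp n (col C a) (col C b)"
    unfolding symp_def using Cc a b
    by (intro sum.cong) (auto simp: index_mult_R simp del: index_mult_mat)
  finally show ?thesis using a b by (simp add: index_R)
qed

lemma Sp_unit_col_imp_unit_row:
  assumes C: "C \<in> Sp n" and x: "x < 2*n" and d: "d < 2*n"
    and col_d: "\<And>y. y < 2*n \<Longrightarrow> C $$ (y, d) = (if y = d then 1 else 0)"
  shows "C $$ (2*n - 1 - d, x) = (if x + d = 2*n - 1 then 1 else 0)"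
proof -
  have Cc: "C \<in> carrier_mat (2*n) (2*n)" using C by (simp add: Sp_def)
  have "symp n (col C x) (col C d) = (\<Sum>y\<in>{0..<2*n}. if y = d then C $$ (2*n - 1 - y, x) else 0)"
    unfolding symp_def using Cc x d col_d by (intro sum.cong) auto
  then show ?thesis using Sp_symp_cols[OF C x d] d by simp
qed

section \<open>Support in \<open>T\<close>\<close>

definition supported_in :: "nat \<Rightarrow> (nat \<times> nat) set \<Rightarrow> bit mat \<Rightarrow> bool" where
  "supported_in n T C \<longleftrightarrow> C \<in> carrier_mat (2*n) (2*n) \<and>
     (\<forall>a<2*n. \<forall>b<2*n. C $$ (a, b) \<noteq> (if a = b then 1 else 0) \<longrightarrow> (a + 1, b + 1) \<in> T)"

lemma P_irrefl: "T \<subseteq> P n \<Longrightarrow> (k, k) \<notin> T"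
  unfolding P_def by auto

lemma Bgrp_iff:
  assumes TP: "T \<subseteq> P n"
  shows "C \<in> Bgrp n T \<longleftrightarrow> C \<in> Sp n \<and> supported_in n T C"
proof
  assume "C \<in> Bgrp n T"
  then obtain c where "C \<in> Sp n" and "C = mat (2*n) (2*n) (\<lambda>(a, b). (if a = b then 1 else 0) +
      (if (a + 1, b + 1) \<in> T then c (a + 1, b + 1) else 0))"
    unfolding Bgrp_def by auto
  then show "C \<in> Sp n \<and> supported_in n T C"
    unfolding supported_in_def using P_irrefl[OF TP] by auto
next
  assume C: "C \<in> Sp n \<and> supported_in n T C"
  then have "C = mat (2*n) (2*n) (\<lambda>(a, b). (if a = b then 1 else 0) +
      (if (a + 1, b + 1) \<in> T then (\<lambda>(i, j). C $$ (i - 1, j - 1)) (a + 1, b + 1) else 0))"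
    unfolding supported_in_def using P_irrefl[OF TP]
    by (intro eq_matI) (auto split: if_splits)
  then show "C \<in> Bgrp n T" unfolding Bgrp_def using C by blast
qed

lemma Bgrp_carrier_mat: "T \<subseteq> P n \<Longrightarrow> B \<in> Bgrp n T \<Longrightarrow> B \<in> carrier_mat (2*n) (2*n)"
  by (simp add: Bgrp_iff supported_in_def)

lemma supported_in_mult:
  assumes TP: "T \<subseteq> P n" and tr: "transitive_rel T"
    and A: "supported_in n T A" and B: "supported_in n T B"
  shows "supported_in n T (A * B)"
proof -
  have Ac: "A \<in> carrier_mat (2*n) (2*n)" and Bc: "B \<in> carrier_mat (2*n) (2*n)"
    using A B by (auto simp: supported_in_def)
  have A_id: "A $$ (a, b) = (if a = b then 1 else 0)"
    if "a < 2*n" "b < 2*n" "(a + 1, b + 1) \<notin> T" for a b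
    using A that unfolding supported_in_def by blast
  have B_id: "B $$ (a, b) = (if a = b then 1 else 0)"
    if "a < 2*n" "b < 2*n" "(a + 1, b + 1) \<notin> T" for a b
    using B that unfolding supported_in_def by blast
  have AB_id: "(A * B) $$ (a, c) = (if a = c then 1 else 0)"
    if a: "a < 2*n" and c: "c < 2*n" and ac: "(a + 1, c + 1) \<notin> T" for a c
  proof -
    have "A $$ (a, b) * B $$ (b, c) = (if a = b then (if a = c then 1 else 0) else 0)"
      if b: "b < 2*n" for b
    proof (cases "(a + 1, b + 1) \<in> T")
      case True
      then have "(b + 1, c + 1) \<notin> T" "b \<noteq> c" "a \<noteq> b"
        using ac tr P_irrefl[OF TP] unfolding transitive_rel_def by blast+
      then show ?thesis using B_id[OF b c] by simp
    next
      case False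
      then show ?thesis using A_id[OF a b] B_id[OF a c ac] by auto
    qed
    then have "(A * B) $$ (a, c) = (\<Sum>b\<in>{0..<2*n}. if a = b then (if a = c then 1 else 0) else 0)"
      using Ac Bc a c by (simp add: scalar_prod_def)
    then show ?thesis using a by simp
  qed
  then show ?thesis
    using Ac Bc mult_carrier_mat unfolding supported_in_def by blast
qed

lemma one_Bgrp: "T \<subseteq> P n \<Longrightarrow> 1\<^sub>m (2*n) \<in> Bgrp n T"
  by (simp add: Bgrp_iff one_Sp supported_in_def)

lemma mult_Bgrp:
  assumes TP: "T \<subseteq> P n" and tr: "transitive_rel T" and A: "A \<in> Bgrp n T" and B: "B \<in> Bgrp n T"
  shows "A * B \<in> Bgrp n T"
  using A B mult_Sp supported_in_mult[OF TP tr] by (simp add: Bgrp_iff[OF TP])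

lemma Bgrp_upper:
  assumes TP: "T \<subseteq> P n" and B: "B \<in> Bgrp n T" and a: "a < 2*n" and c: "c < 2*n" and ac: "a \<le> c"
  shows "B $$ (a, c) = (if a = c then 1 else 0)"
proof (rule ccontr)
  assume "B $$ (a, c) \<noteq> (if a = c then 1 else 0)"
  then have "(a + 1, c + 1) \<in> T" using B a c unfolding Bgrp_iff[OF TP] supported_in_def by blast
  then show False using TP ac unfolding P_def by auto
qed

text \<open>The three correction terms of \<open>Sv n v i\<close> sit in column \<open>i\<close> (support of \<open>v\<close>), in row
  \<open>2n+1-i\<close> (mirror image of the support of \<open>v\<close>, covered by reversal closure) and at
  \<open>(2n+1-i, i)\<close>.\<close>

lemma supported_in_Sv:
  assumes rc: "reversal_closed n T" and v: "v \<in> carrier_vec (2*n)" and i: "i \<in> {1..2*n}"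
    and supp: "\<forall>k \<in> {1..2*n}. v $ (k - 1) \<noteq> 0 \<longrightarrow> (k, i) \<in> T"
  shows "supported_in n T (Sv n v i)"
  unfolding supported_in_def
proof (intro conjI allI impI)
  show "Sv n v i \<in> carrier_mat (2*n) (2*n)" using v by simp
  fix a b assume a: "a < 2*n" and b: "b < 2*n"
    and ne: "Sv n v i $$ (a, b) \<noteq> (if a = b then 1 else 0)"
  have supp': "(k + 1, i) \<in> T" if "k < 2*n" "v $ k \<noteq> 0" for k
    using supp[rule_format, of "k + 1"] that by simp
  consider "b = i - 1" "v $ a \<noteq> 0" | "a = 2*n - i" "v $ (2*n - 1 - b) \<noteq> 0"
    | "a = 2*n - i" "b = i - 1" "v $ (2*n - i) \<noteq> 0"
    using ne index_Sv[OF v a b i] by (auto split: if_splits)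
  then show "(a + 1, b + 1) \<in> T"
  proof cases
    case 1
    then show ?thesis using supp'[OF a] i by auto
  next
    case 2
    then have "(2*n - b, i) \<in> T" using supp'[of "2*n - 1 - b"] b by (simp add: Suc_diff_Suc)
    then have "(2*n + 1 - i, 2*n + 1 - (2*n - b)) \<in> T"
      using rc unfolding reversal_closed_def by blast
    then show ?thesis using 2 b i by (simp add: Suc_diff_le)
  next
    case 3
    then show ?thesis using supp'[of "2*n - i"] i by auto
  qed
qed

lemma Sv_Bgrp:
  assumes TP: "T \<subseteq> P n" and rc: "reversal_closed n T" and v: "v \<in> carrier_vec (2*n)"
    and i: "i \<in> {1..2*n}" and supp: "\<forall>k \<in> {1..2*n}. v $ (k - 1) \<noteq> 0 \<longrightarrow> (k, i) \<in> T"
  shows "Sv n v i \<in> Bgrp n T"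
proof -
  have "v $ (i - 1) = 0" using supp i P_irrefl[OF TP, of i] by blast
  then show ?thesis
    using Sv_Sp[OF v i] supported_in_Sv[OF rc v i supp] by (simp add: Bgrp_iff[OF TP])
qed

lemma index_S:
  assumes "a < 2*n" "b < 2*n"
  shows "S n i j $$ (a, b) = (if a = b then 1 else 0) + (if a = i - 1 \<and> b = j - 1 then 1 else 0)
     + (if i + j \<noteq> 2*n + 1 \<and> a = 2*n - j \<and> b = 2*n - i then 1 else 0)"
  using assms by (cases "i + j = 2*n + 1") (simp_all add: S_def index_E)

lemma S_eq_Sv:
  assumes i: "i \<in> {1..2*n}" and j: "j \<in> {1..2*n}" and ij: "i \<noteq> j"
  shows "S n i j = Sv n (ev (2*n) i) j"
proof (rule eq_matI)
  fix a b assume "a < dim_row (Sv n (ev (2*n) i) j)" "b < dim_col (Sv n (ev (2*n) i) j)"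
  then have a: "a < 2*n" and b: "b < 2*n" by simp_all
  have e: "2*n - j < 2*n" "2*n - 1 - b < 2*n" "(2*n - 1 - b = i - 1) = (b = 2*n - i)"
    using i j b by auto
  show "S n i j $$ (a, b) = Sv n (ev (2*n) i) j $$ (a, b)"
  proof (cases "i + j = 2*n + 1")
    case True
    then have "2*n - j = i - 1" "2*n - i = j - 1" by auto
    then show ?thesis
      unfolding index_S[OF a b] index_Sv[OF ev_carrier_vec a b j] using a b e True
      by (simp add: index_ev)
  next
    case False
    then have "2*n - j \<noteq> i - 1" "j - 1 \<noteq> 2*n - i" using i j by auto
    then show ?thesis
      unfolding index_S[OF a b] index_Sv[OF ev_carrier_vec a b j] using a b e False
      by (simp add: index_ev)
  qed
qed (simp_all add: S_def)

lemma S_Bgrp: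
  assumes TP: "T \<subseteq> P n" and rc: "reversal_closed n T" and ij: "(i, j) \<in> T"
  shows "S n i j \<in> Bgrp n T"
proof -
  have i: "i \<in> {1..2*n}" and j: "j \<in> {1..2*n}" and ne: "i \<noteq> j"
    using ij TP unfolding P_def by auto
  have "\<forall>k \<in> {1..2*n}. ev (2*n) i $ (k - 1) \<noteq> 0 \<longrightarrow> k = i"
    using i by (auto simp: index_ev split: if_splits)
  then have "\<forall>k \<in> {1..2*n}. ev (2*n) i $ (k - 1) \<noteq> 0 \<longrightarrow> (k, j) \<in> T"
    using ij by blast
  then show ?thesis using S_eq_Sv[OF i j ne] Sv_Bgrp[OF TP rc ev_carrier_vec j] by simp
qed

section \<open>Products of generators\<close>

lemma prodm_Nil [simp]: "prodm N [] = 1\<^sub>m N"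
  by (simp add: prodm_def)

lemma prodm_Cons [simp]: "prodm N (A # As) = A * prodm N As"
  by (simp add: prodm_def)

lemma prodm_carrier_mat: "set As \<subseteq> carrier_mat N N \<Longrightarrow> prodm N As \<in> carrier_mat N N"
  by (induction As) auto

lemma prodm_append:
  "set As \<subseteq> carrier_mat N N \<Longrightarrow> set Bs \<subseteq> carrier_mat N N \<Longrightarrow>
    prodm N (As @ Bs) = prodm N As * prodm N Bs"
  by (induction As)
    (auto simp: prodm_carrier_mat assoc_mult_mat[of _ N N _ N _ N]
      left_mult_one_mat[OF prodm_carrier_mat])

definition gen_prods :: "nat \<Rightarrow> (nat \<times> nat) set \<Rightarrow> bit mat set" where
  "gen_prods n T = {prodm (2*n) gs | gs. set gs \<subseteq> Gens n T}"

lemma Gens_carrier_mat: "Gens n T \<subseteq> carrier_mat (2*n) (2*n)"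
  unfolding Gens_def by (auto intro: carrier_matI simp: S_def)

lemma gen_prods_carrier_mat: "A \<in> gen_prods n T \<Longrightarrow> A \<in> carrier_mat (2*n) (2*n)"
  unfolding gen_prods_def using Gens_carrier_mat prodm_carrier_mat by blast

lemma one_gen_prods: "1\<^sub>m (2*n) \<in> gen_prods n T"
  unfolding gen_prods_def by (auto intro!: exI[of _ "[]"])

lemma Gens_gen_prods:
  assumes "g \<in> Gens n T" shows "g \<in> gen_prods n T"
proof -
  have "g \<in> carrier_mat (2*n) (2*n)" using assms Gens_carrier_mat by blast
  then have "g = prodm (2*n) [g]" by simp
  moreover have "set [g] \<subseteq> Gens n T" using assms by simp
  ultimately show ?thesis unfolding gen_prods_def by blast
qed

lemma mult_gen_prods:
  assumes "A \<in> gen_prods n T" "B \<in> gen_prods n T" shows "A * B \<in> gen_prods n T"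
proof -
  obtain as bs where "set as \<subseteq> Gens n T" "A = prodm (2*n) as"
    and "set bs \<subseteq> Gens n T" "B = prodm (2*n) bs"
    using assms unfolding gen_prods_def by blast
  moreover have "set as \<subseteq> carrier_mat (2*n) (2*n)" "set bs \<subseteq> carrier_mat (2*n) (2*n)"
    using calculation Gens_carrier_mat by blast+
  ultimately have "A * B = prodm (2*n) (as @ bs)" "set (as @ bs) \<subseteq> Gens n T"
    by (auto simp: prodm_append)
  then show ?thesis unfolding gen_prods_def by blast
qed

lemma prodm_gen_prods: "set As \<subseteq> gen_prods n T \<Longrightarrow> prodm (2*n) As \<in> gen_prods n T"
  by (induction As) (auto simp: one_gen_prods mult_gen_prods)

text \<open>The rows \<open>x + 1\<close> allowed here are exactly those with \<open>S n (x + 1) j \<in> Gens n T\<close>.\<close>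

definition supported_on_Gens :: "nat \<Rightarrow> (nat \<times> nat) set \<Rightarrow> nat \<Rightarrow> bit vec \<Rightarrow> bool" where
  "supported_on_Gens n T j v \<longleftrightarrow> v \<in> carrier_vec (2*n) \<and>
     (\<forall>x<2*n. v $ x \<noteq> 0 \<longrightarrow> j \<le> x \<and> x \<le> 2*n - j \<and> (x + 1, j) \<in> T)"

lemma Sv_ev_Gens:
  assumes j: "j \<in> {1..n}" and x: "j \<le> x" "x \<le> 2*n - j" and xj: "(x + 1, j) \<in> T"
  shows "Sv n (ev (2*n) (x + 1)) j \<in> Gens n T"
proof -
  have "S n (x + 1) j \<in> Gens n T"
    unfolding Gens_def mem_Collect_eq using j x xj by (intro exI[of _ "x + 1"] exI[of _ j]) auto
  moreover have "S n (x + 1) j = Sv n (ev (2*n) (x + 1)) j"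
    using j x by (intro S_eq_Sv) auto
  ultimately show ?thesis by simp
qed

lemma supported_on_Gens_diag:
  assumes "supported_on_Gens n T j v" "j \<in> {1..n}" shows "v $ (j - 1) = 0"
proof (rule ccontr)
  assume "v $ (j - 1) \<noteq> 0"
  then have "j \<le> j - 1" using assms unfolding supported_on_Gens_def by auto
  then show False using assms(2) by auto
qed

lemma supported_on_Gens_Sv_Bgrp:
  assumes TP: "T \<subseteq> P n" and rc: "reversal_closed n T" and j: "j \<in> {1..n}"
    and v: "supported_on_Gens n T j v"
  shows "Sv n v j \<in> Bgrp n T"
proof (rule Sv_Bgrp[OF TP rc])
  show "v \<in> carrier_vec (2*n)" using v unfolding supported_on_Gens_def by blast
  show "j \<in> {1..2*n}" using j by auto
  show "\<forall>k\<in>{1..2*n}. v $ (k - 1) \<noteq> 0 \<longrightarrow> (k, j) \<in> T"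
  proof (intro ballI impI)
    fix k assume k: "k \<in> {1..2*n}" and "v $ (k - 1) \<noteq> 0"
    moreover have "k - 1 < 2*n" using k by auto
    ultimately have "(k - 1 + 1, j) \<in> T" using v unfolding supported_on_Gens_def by blast
    then show "(k, j) \<in> T" using k by simp
  qed
qed

lemma reversal_closed_corner:
  assumes tr: "transitive_rel T" and rc: "reversal_closed n T"
    and a: "(a, j) \<in> T" and a': "(2*n + 1 - a, j) \<in> T" and le: "a \<le> 2*n + 1"
  shows "(2*n + 1 - j, j) \<in> T"
proof -
  have "(2*n + 1 - j, 2*n + 1 - (2*n + 1 - a)) \<in> T"
    using a' rc unfolding reversal_closed_def by blast
  then have "(2*n + 1 - j, a) \<in> T" using le by simp
  then show ?thesis using a tr unfolding transitive_rel_def by blast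
qed

text \<open>Adding \<open>e = ev (2*n) (m + 1)\<close> costs one generator, plus the generator \<open>S n (2n+1-j) j\<close>
  to cancel the correction term \<open>symp n w e\<close> when it is nonzero.\<close>

lemma Sv_add_ev_gen_prods:
  assumes tr: "transitive_rel T" and rc: "reversal_closed n T" and j: "j \<in> {1..n}"
    and w: "supported_on_Gens n T j w" and Sw: "Sv n w j \<in> gen_prods n T"
    and m: "j \<le> m" "m \<le> 2*n - j" and mj: "(m + 1, j) \<in> T"
  shows "Sv n (w + ev (2*n) (m + 1)) j \<in> gen_prods n T"
proof -
  define e where "e = ev (2*n) (m + 1)"
  have j2: "j \<in> {1..2*n}" and m2: "m < 2*n" using j m by auto
  have wc: "w \<in> carrier_vec (2*n)" and w_supp: "\<And>x. x < 2*n \<Longrightarrow> w $ x \<noteq> 0 \<Longrightarrow> (x + 1, j) \<in> T"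
    using w unfolding supported_on_Gens_def by blast+
  have wj: "w $ (j - 1) = 0" using supported_on_Gens_diag[OF w j] .
  have ec: "e \<in> carrier_vec (2*n)" and ej: "e $ (j - 1) = 0"
    unfolding e_def using m j by (auto simp: index_ev)
  have we: "w + e \<in> carrier_vec (2*n)" "(w + e) $ (j - 1) = 0"
    using wc ec wj ej j by auto
  have Se: "Sv n e j \<in> gen_prods n T"
    unfolding e_def using Sv_ev_Gens[OF j m mj] by (rule Gens_gen_prods)
  have symp_we: "symp n w e = w $ (2*n - 1 - m)"
    unfolding e_def using symp_ev[OF m2] .
  show ?thesis
  proof (cases "w $ (2*n - 1 - m) = 0")
    case True
    have "Sv n w j * Sv n e j = Sv n (w + e) j"
      by (rule Sv_mult_Sv[OF wc ec we(1) j2 wj ej]) (use wc ec True symp_we in auto)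
    then show ?thesis using mult_gen_prods[OF Sw Se] by (simp add: e_def)
  next
    case False
    have "(2*n + 1 - (m + 1), j) \<in> T" using w_supp[of "2*n - 1 - m"] False m2
      by (simp add: Suc_diff_Suc)
    then have "(2*n + 1 - j, j) \<in> T" using reversal_closed_corner[OF tr rc mj] m2 by simp
    then have "(2*n - j + 1, j) \<in> T" using j by (simp add: Suc_diff_le)
    define f where "f = ev (2*n) (2*n - j + 1)"
    have Sf: "Sv n f j \<in> gen_prods n T"
      unfolding f_def using j \<open>(2*n - j + 1, j) \<in> T\<close>
      by (intro Gens_gen_prods Sv_ev_Gens[of j n "2*n - j"]) auto
    have fc: "f \<in> carrier_vec (2*n)"
      and f_idx: "\<And>x. x < 2*n \<Longrightarrow> f $ x = (if x = 2*n - j then 1 else 0)"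
      and fj: "f $ (j - 1) = 0"
      unfolding f_def using j by (auto simp: index_ev)
    have wef: "w + e + f \<in> carrier_vec (2*n)" "(w + e + f) $ (j - 1) = 0"
      using wc ec fc wj ej fj j by auto
    have "symp n (w + e + f) f = (w + e + f) $ (j - 1)"
      unfolding f_def using symp_ev[of "2*n - j" n] j by auto
    then have "Sv n (w + e + f) j * Sv n f j = Sv n (w + e) j"
      by (intro Sv_mult_Sv[OF wef(1) fc we(1) j2 wef(2) fj]) (use wc ec fc wef in auto)
    moreover have "Sv n w j * Sv n e j = Sv n (w + e + f) j"
      by (rule Sv_mult_Sv[OF wc ec wef(1) j2 wj ej]) (use wc ec fc False symp_we f_idx in auto)
    ultimately show ?thesis
      using mult_gen_prods[OF mult_gen_prods[OF Sw Se] Sf] by (simp add: e_def)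
  qed
qed

lemma Sv_gen_prods:
  assumes tr: "transitive_rel T" and rc: "reversal_closed n T" and j: "j \<in> {1..n}"
    and v: "supported_on_Gens n T j v"
  shows "Sv n v j \<in> gen_prods n T"
proof -
  define trunc where "trunc m = vec (2*n) (\<lambda>x. if x < m then v $ x else 0)" for m
  have vc: "v \<in> carrier_vec (2*n)" using v unfolding supported_on_Gens_def by blast
  have trunc_supp: "supported_on_Gens n T j (trunc m)" for m
    using v unfolding supported_on_Gens_def trunc_def by auto
  have Sv_trunc: "Sv n (trunc m) j \<in> gen_prods n T" for m
  proof (induction m)
    case 0
    have "trunc 0 = 0\<^sub>v (2*n)" unfolding trunc_def by (intro eq_vecI) auto
    then show ?case using Sv_zero[of j n] j one_gen_prods by auto
  next
    case (Suc m)
    show ?case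
    proof (cases "m < 2*n \<and> v $ m \<noteq> 0")
      case True
      then have "j \<le> m" "m \<le> 2*n - j" "(m + 1, j) \<in> T"
        using v unfolding supported_on_Gens_def by auto
      moreover have "trunc (Suc m) = trunc m + ev (2*n) (m + 1)"
        using True unfolding trunc_def by (intro eq_vecI) (auto simp: index_ev less_Suc_eq)
      ultimately show ?thesis
        using Sv_add_ev_gen_prods[OF tr rc j trunc_supp Suc.IH] by simp
    next
      case False
      then have "trunc (Suc m) = trunc m" unfolding trunc_def
        by (intro eq_vecI) (auto simp: less_Suc_eq)
      then show ?thesis using Suc.IH by simp
    qed
  qed
  have "trunc (2*n) = v" using vc unfolding trunc_def by (intro eq_vecI) auto
  then show ?thesis using Sv_trunc[of "2*n"] by simp
qed

section \<open>Column reduction\<close>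

lemma V_col_carrier_vec [simp]: "V n B *\<^sub>v ev n j \<in> carrier_vec (2*n)"
  by (rule carrier_vecI) (simp add: V_def)

lemma index_V_col:
  assumes j: "j \<in> {1..n}" and a: "a < 2*n"
  shows "(V n B *\<^sub>v ev n j) $ a = (if j \<le> a \<and> a \<le> 2*n - j then B $$ (a, j - 1) else 0)"
proof -
  have "(V n B *\<^sub>v ev n j) $ a = (\<Sum>b\<in>{0..<n}. V n B $$ (a, b) * ev n j $ b)"
    using a by (simp add: V_def scalar_prod_def)
  also have "\<dots> = (\<Sum>b\<in>{0..<n}. if b = j - 1 then V n B $$ (a, b) else 0)"
    by (intro sum.cong) (auto simp: index_ev)
  also have "\<dots> = V n B $$ (a, j - 1)" using j by auto
  finally show ?thesis using a j by (auto simp: V_def)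
qed

lemma V_col_supported_on_Gens:
  assumes TP: "T \<subseteq> P n" and B: "B \<in> Bgrp n T" and j: "j \<in> {1..n}"
  shows "supported_on_Gens n T j (V n B *\<^sub>v ev n j)"
  unfolding supported_on_Gens_def
proof (intro conjI[OF V_col_carrier_vec] allI impI)
  fix x assume x: "x < 2*n" and nz: "(V n B *\<^sub>v ev n j) $ x \<noteq> 0"
  then have r: "j \<le> x" "x \<le> 2*n - j" and "B $$ (x, j - 1) \<noteq> 0"
    using index_V_col[OF j x] by (auto split: if_splits)
  then have "B $$ (x, j - 1) \<noteq> (if x = j - 1 then 1 else 0)" using j by auto
  moreover have "j - 1 < 2*n" using j by auto
  ultimately have "(x + 1, j - 1 + 1) \<in> T"
    using B x unfolding Bgrp_iff[OF TP] supported_in_def by blast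
  then show "j \<le> x \<and> x \<le> 2*n - j \<and> (x + 1, j) \<in> T" using r j by simp
qed

definition leading_id_cols :: "nat \<Rightarrow> nat \<Rightarrow> bit mat \<Rightarrow> bool" where
  "leading_id_cols n m B \<longleftrightarrow> (\<forall>c<m. \<forall>a<2*n. B $$ (a, c) = (if a = c then 1 else 0))"

lemma Bgrp_leading_id_cols_eq_one:
  assumes TP: "T \<subseteq> P n" and B: "B \<in> Bgrp n T" and cols: "leading_id_cols n n B"
  shows "B = 1\<^sub>m (2*n)"
proof (rule eq_matI)
  fix a c assume "a < dim_row (1\<^sub>m (2*n))" "c < dim_col (1\<^sub>m (2*n))"
  then have a: "a < 2*n" and c: "c < 2*n" by auto
  show "B $$ (a, c) = 1\<^sub>m (2*n) $$ (a, c)"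
  proof (cases "c < n \<or> a \<le> c")
    case True
    then show ?thesis
      using cols Bgrp_upper[OF TP B a c] a c unfolding leading_id_cols_def by auto
  next
    case False
    then have d: "2*n - 1 - a < n" and a_eq: "2*n - 1 - (2*n - 1 - a) = a" using a by auto
    have "B $$ (2*n - 1 - (2*n - 1 - a), c) = (if c + (2*n - 1 - a) = 2*n - 1 then 1 else 0)"
      using B cols d c unfolding Bgrp_iff[OF TP] leading_id_cols_def
      by (intro Sp_unit_col_imp_unit_row) auto
    then show ?thesis using False a c a_eq by auto
  qed
qed (use Bgrp_carrier_mat[OF TP B] in auto)

text \<open>Below row \<open>2n - m\<close>, where \<open>V\<close> discards them, the entries of column \<open>m\<close> vanish by
  \<open>Sp_unit_col_imp_unit_row\<close>.\<close>

lemma Bgrp_next_col: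
  assumes TP: "T \<subseteq> P n" and B: "B \<in> Bgrp n T" and cols: "leading_id_cols n m B"
    and m: "m < n" and a: "a < 2*n"
  shows "B $$ (a, m) = (if a = m then 1 else 0) + (V n B *\<^sub>v ev n (m + 1)) $ a"
proof -
  have j: "m + 1 \<in> {1..n}" using m by auto
  consider "a \<le> m" | "m + 1 \<le> a \<and> a \<le> 2*n - (m + 1)" | "2*n - (m + 1) < a" by linarith
  then show ?thesis
  proof cases
    case 1
    then show ?thesis using Bgrp_upper[OF TP B a, of m] index_V_col[OF j a] m by auto
  next
    case 2
    then show ?thesis using index_V_col[OF j a] by auto
  next
    case 3
    then have d: "2*n - 1 - a < m" and a_eq: "2*n - 1 - (2*n - 1 - a) = a" using a by auto
    have "B $$ (2*n - 1 - (2*n - 1 - a), m) = (if m + (2*n - 1 - a) = 2*n - 1 then 1 else 0)"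
      using B cols d m unfolding Bgrp_iff[OF TP] leading_id_cols_def
      by (intro Sp_unit_col_imp_unit_row) auto
    then show ?thesis using 3 a_eq index_V_col[OF j a] by auto
  qed
qed

lemma Bgrp_clear_col:
  assumes TP: "T \<subseteq> P n" and B: "B \<in> Bgrp n T" and cols: "leading_id_cols n m B" and m: "m < n"
  defines "v \<equiv> V n B *\<^sub>v ev n (m + 1)"
  shows "leading_id_cols n (m + 1) (Sv n v (m + 1) * B)"
  unfolding leading_id_cols_def
proof (intro allI impI)
  fix c a assume c: "c < m + 1" and a: "a < 2*n"
  have j: "m + 1 \<in> {1..n}" "m + 1 \<in> {1..2*n}" using m by auto
  have Bc: "B \<in> carrier_mat (2*n) (2*n)" using Bgrp_carrier_mat[OF TP B] .
  have c2: "c < 2*n" using c m by auto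
  have v_idx: "\<And>x. x < 2*n \<Longrightarrow> v $ x = (if m + 1 \<le> x \<and> x \<le> 2*n - (m + 1) then B $$ (x, m) else 0)"
    unfolding v_def using index_V_col[OF j(1)] by simp
  have prod: "(Sv n v (m + 1) * B) $$ (a, c) = B $$ (a, c) + v $ a * B $$ (m, c)
    + (if a = 2*n - (m + 1) then symp n v (col B c) + v $ (2*n - (m + 1)) * B $$ (m, c) else 0)"
    using index_Sv_mult[OF _ Bc a c2 j(2)] by (simp add: v_def)
  show "(Sv n v (m + 1) * B) $$ (a, c) = (if a = c then 1 else 0)"
  proof (cases "c < m")
    case True
    have "col B c = ev (2*n) (c + 1)"
      using cols True Bc c2 unfolding leading_id_cols_def by (intro eq_vecI) (auto simp: index_ev)
    then have "symp n v (col B c) = 0"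
      using symp_ev[OF c2] v_idx[of "2*n - 1 - c"] True m by auto
    then show ?thesis using prod cols True a m unfolding leading_id_cols_def by auto
  next
    case False
    then have cm: "c = m" using c by auto
    have B_col: "\<And>x. x < 2*n \<Longrightarrow> B $$ (x, m) = (if x = m then 1 else 0) + v $ x"
      unfolding v_def using Bgrp_next_col[OF TP B cols m] .
    have "v \<in> carrier_vec (2*n)" unfolding v_def by simp
    then have "col B m = ev (2*n) (m + 1) + v"
      using Bc m B_col by (intro eq_vecI) (auto simp: index_ev)
    then have "symp n v (col B m) = v $ (2*n - 1 - m)"
      using symp_add_right[of "ev (2*n) (m + 1)" n v v] symp_ev[of m n v] m unfolding v_def by auto
    moreover have "B $$ (m, m) = 1" using B_col[of m] v_idx[of m] m by auto
    ultimately show ?thesis using prod B_col[OF a] cm by (auto simp: Suc_diff_Suc)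
  qed
qed

lemma Bgrp_clear_col_V_col:
  assumes TP: "T \<subseteq> P n" and B: "B \<in> Bgrp n T" and m: "m < n" and l: "l \<in> {m + 2..n}"
  defines "v \<equiv> V n B *\<^sub>v ev n (m + 1)"
  shows "V n (Sv n v (m + 1) * B) *\<^sub>v ev n l = V n B *\<^sub>v ev n l"
proof (rule eq_vecI)
  fix a assume "a < dim_vec (V n B *\<^sub>v ev n l)"
  then have a: "a < 2*n" by (simp add: V_def)
  have j: "m + 1 \<in> {1..2*n}" and l1: "l \<in> {1..n}" and l2: "l - 1 < 2*n" using m l by auto
  have Bc: "B \<in> carrier_mat (2*n) (2*n)" using Bgrp_carrier_mat[OF TP B] .
  have "(Sv n v (m + 1) * B) $$ (a, l - 1) = B $$ (a, l - 1)" if "a \<le> 2*n - l"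
  proof -
    have "B $$ (m, l - 1) = 0" using Bgrp_upper[OF TP B _ l2, of m] l m by auto
    moreover have "a \<noteq> 2*n - (m + 1)" using that l m by auto
    ultimately show ?thesis using index_Sv_mult[OF _ Bc a l2 j] by (simp add: v_def)
  qed
  then show "(V n (Sv n v (m + 1) * B) *\<^sub>v ev n l) $ a = (V n B *\<^sub>v ev n l) $ a"
    using index_V_col[OF l1 a] by auto
qed (simp add: V_def)

lemma Bgrp_factorization_from:
  assumes TP: "T \<subseteq> P n" and tr: "transitive_rel T" and rc: "reversal_closed n T"
  shows "B \<in> Bgrp n T \<Longrightarrow> leading_id_cols n m B \<Longrightarrow> m \<le> n \<Longrightarrow>
    B = prodm (2*n) (map (\<lambda>j. Sv n (V n B *\<^sub>v ev n j) j) [m + 1..<n + 1])"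
proof (induction "n - m" arbitrary: m B)
  case 0
  then show ?case using Bgrp_leading_id_cols_eq_one[OF TP] by simp
next
  case (Suc k)
  note B = Suc.prems(1) and cols = Suc.prems(2)
  have m: "m < n" and j: "m + 1 \<in> {1..n}" "m + 1 \<in> {1..2*n}" using Suc.hyps(2) by auto
  define v where "v = V n B *\<^sub>v ev n (m + 1)"
  define B' where "B' = Sv n v (m + 1) * B"
  have v: "supported_on_Gens n T (m + 1) v"
    unfolding v_def using V_col_supported_on_Gens[OF TP B j(1)] .
  have B': "B' \<in> Bgrp n T" unfolding B'_def
    using mult_Bgrp[OF TP tr supported_on_Gens_Sv_Bgrp[OF TP rc j(1) v] B] .
  have "B' = prodm (2*n) (map (\<lambda>j. Sv n (V n B' *\<^sub>v ev n j) j) [m + 2..<n + 1])"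
    using Suc.hyps(1)[of "m + 1" B'] Suc.hyps(2) B' m Bgrp_clear_col[OF TP B cols m]
    by (simp add: B'_def v_def)
  moreover have "map (\<lambda>j. Sv n (V n B' *\<^sub>v ev n j) j) [m + 2..<n + 1]
      = map (\<lambda>j. Sv n (V n B *\<^sub>v ev n j) j) [m + 2..<n + 1]"
    using Bgrp_clear_col_V_col[OF TP B m] by (intro map_cong) (auto simp: B'_def v_def)
  ultimately have IH: "B' = prodm (2*n) (map (\<lambda>j. Sv n (V n B *\<^sub>v ev n j) j) [m + 2..<n + 1])"
    by (simp only:)
  have Bc: "B \<in> carrier_mat (2*n) (2*n)" using Bgrp_carrier_mat[OF TP B] .
  have vc: "v \<in> carrier_vec (2*n)" and vj: "v $ (m + 1 - 1) = 0"
    using supported_on_Gens_diag[OF v j(1)] unfolding v_def by auto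
  have "Sv n v (m + 1) * B' = (Sv n v (m + 1) * Sv n v (m + 1)) * B"
    unfolding B'_def using vc Bc by (simp add: assoc_mult_mat[of _ "2*n" "2*n" _ "2*n" _ "2*n"])
  then have B_eq: "B = Sv n v (m + 1) * B'"
    using Sv_involution[OF vc j(2) vj] Bc by simp
  have "[m + 1..<n + 1] = (m + 1) # [m + 2..<n + 1]"
    using m by (simp add: upt_rec)
  then show ?case using B_eq IH by (simp add: v_def)
qed

lemma Bgrp_factorization:
  assumes TP: "T \<subseteq> P n" and tr: "transitive_rel T" and rc: "reversal_closed n T"
    and B: "B \<in> Bgrp n T"
  shows "B = prodm (2*n) (map (\<lambda>j. Sv n (V n B *\<^sub>v ev n j) j) [1..<n + 1])"
  using Bgrp_factorization_from[OF TP tr rc B, of 0] by (simp add: leading_id_cols_def)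

section \<open>The generated group\<close>

lemma Gens_Bgrp: "T \<subseteq> P n \<Longrightarrow> reversal_closed n T \<Longrightarrow> Gens n T \<subseteq> Bgrp n T"
  unfolding Gens_def using S_Bgrp by blast

lemma gen_prods_subset_Bgrp:
  assumes TP: "T \<subseteq> P n" and tr: "transitive_rel T" and rc: "reversal_closed n T"
  shows "gen_prods n T \<subseteq> Bgrp n T"
proof
  fix A assume "A \<in> gen_prods n T"
  then obtain gs where "set gs \<subseteq> Gens n T" "A = prodm (2*n) gs"
    unfolding gen_prods_def by blast
  then show "A \<in> Bgrp n T"
    using Gens_Bgrp[OF TP rc]
    by (induction gs arbitrary: A) (auto simp: one_Bgrp[OF TP] mult_Bgrp[OF TP tr])
qed

lemma Bgrp_subset_gen_prods:
  assumes TP: "T \<subseteq> P n" and tr: "transitive_rel T" and rc: "reversal_closed n T"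
  shows "Bgrp n T \<subseteq> gen_prods n T"
proof
  fix B assume B: "B \<in> Bgrp n T"
  have "Sv n (V n B *\<^sub>v ev n j) j \<in> gen_prods n T" if "j \<in> {1..n}" for j
    using Sv_gen_prods[OF tr rc that V_col_supported_on_Gens[OF TP B that]] .
  then have "prodm (2*n) (map (\<lambda>j. Sv n (V n B *\<^sub>v ev n j) j) [1..<n + 1]) \<in> gen_prods n T"
    by (intro prodm_gen_prods) auto
  then show "B \<in> gen_prods n T" using Bgrp_factorization[OF TP tr rc B] by simp
qed

lemma Gens_involution:
  assumes TP: "T \<subseteq> P n" and g: "g \<in> Gens n T" shows "g * g = 1\<^sub>m (2*n)"
proof -
  obtain i j where g_eq: "g = S n i j" and ij: "(i, j) \<in> T" using g unfolding Gens_def by auto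
  have i: "i \<in> {1..2*n}" and j: "j \<in> {1..2*n}" and ne: "i \<noteq> j" using ij TP unfolding P_def by auto
  have "ev (2*n) i $ (j - 1) = 0" using i j ne by (auto simp: index_ev)
  then show ?thesis unfolding g_eq S_eq_Sv[OF i j ne] by (rule Sv_involution[OF ev_carrier_vec j])
qed

lemma gen_prods_left_inverse:
  assumes TP: "T \<subseteq> P n" and A: "A \<in> gen_prods n T"
  shows "\<exists>A' \<in> gen_prods n T. A' * A = 1\<^sub>m (2*n)"
proof -
  obtain gs where "set gs \<subseteq> Gens n T" "A = prodm (2*n) gs"
    using A unfolding gen_prods_def by blast
  then show ?thesis
  proof (induction gs arbitrary: A)
    case Nil
    then show ?case by (intro bexI[OF _ one_gen_prods]) simp
  next
    case (Cons g gs)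
    then obtain Q where Q: "Q \<in> gen_prods n T" "Q * prodm (2*n) gs = 1\<^sub>m (2*n)" by auto
    have g: "g \<in> Gens n T" "g \<in> carrier_mat (2*n) (2*n)" using Cons.prems Gens_carrier_mat by auto
    have P: "prodm (2*n) gs \<in> carrier_mat (2*n) (2*n)"
      using Cons.prems(1) Gens_carrier_mat by (intro prodm_carrier_mat) auto
    have "Q * g * (g * prodm (2*n) gs) = Q * (g * g) * prodm (2*n) gs"
      using Q(1) g(2) P
      by (simp add: gen_prods_carrier_mat assoc_mult_mat[of _ "2*n" "2*n" _ "2*n" _ "2*n"])
    also have "\<dots> = 1\<^sub>m (2*n)"
      using Gens_involution[OF TP g(1)] Q gen_prods_carrier_mat[OF Q(1)] by simp
    finally show ?case
      using mult_gen_prods[OF Q(1) Gens_gen_prods[OF g(1)]] Cons.prems(2) by auto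
  qed
qed

lemma prodm_gen_group: "set gs \<subseteq> G \<Longrightarrow> prodm N gs \<in> gen_group N G"
  by (induction gs) (auto intro: gen_group.intros)

lemma gen_group_eq_Bgrp:
  assumes TP: "T \<subseteq> P n" and tr: "transitive_rel T" and rc: "reversal_closed n T"
  shows "gen_group (2*n) (Gens n T) = Bgrp n T"
proof
  show "gen_group (2*n) (Gens n T) \<subseteq> Bgrp n T"
  proof
    fix A assume "A \<in> gen_group (2*n) (Gens n T)"
    then show "A \<in> Bgrp n T"
    proof (induction rule: gen_group.induct)
      case one
      then show ?case using one_Bgrp[OF TP] .
    next
      case (gen g)
      then show ?case using Gens_Bgrp[OF TP rc] by auto
    next
      case (mult A C)
      then show ?case using mult_Bgrp[OF TP tr] by blast
    next
      case (inv A A')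
      obtain Q where Q: "Q \<in> gen_prods n T" "Q * A = 1\<^sub>m (2*n)"
        using gen_prods_left_inverse[OF TP] Bgrp_subset_gen_prods[OF TP tr rc] inv.IH by blast
      have "A' = Q * A * A'" using Q(2) inv.hyps(2) by simp
      also have "\<dots> = Q"
        using inv.hyps(2,3) Bgrp_carrier_mat[OF TP inv.IH] gen_prods_carrier_mat[OF Q(1)]
        by (simp add: assoc_mult_mat[of _ "2*n" "2*n" _ "2*n" _ "2*n"])
      finally show ?case using Q(1) gen_prods_subset_Bgrp[OF TP tr rc] by auto
    qed
  qed
  show "Bgrp n T \<subseteq> gen_group (2*n) (Gens n T)"
    using Bgrp_subset_gen_prods[OF TP tr rc] prodm_gen_group unfolding gen_prods_def by blast
qed

theorem theorem2:
  fixes n :: nat and T :: "(nat \<times> nat) set"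
  assumes "T \<subseteq> P n" and "transitive_rel T" and "reversal_closed n T"
  shows "(\<forall>(i, j) \<in> T. S n i j \<in> Bgrp n T)
    \<and> (\<forall>i \<in> {1..2*n}. \<forall>v \<in> carrier_vec (2*n).
          (\<forall>k \<in> {1..2*n}. v $ (k - 1) \<noteq> 0 \<longrightarrow> (k, i) \<in> T) \<longrightarrow> Sv n v i \<in> Bgrp n T)
    \<and> gen_group (2*n) (Gens n T) = Bgrp n T
    \<and> (\<forall>B \<in> Bgrp n T.
          B = prodm (2*n) (map (\<lambda>j. Sv n (V n B *\<^sub>v ev n j) j) [1..<n+1])
          \<and> (\<forall>j \<in> {1..n}. Sv n (V n B *\<^sub>v ev n j) j \<in> Bgrp n T
               \<and> (\<exists>gs. set gs \<subseteq> Gens n T \<and> Sv n (V n B *\<^sub>v ev n j) j = prodm (2*n) gs)))"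
proof (intro conjI)
  note TP = assms(1) and tr = assms(2) and rc = assms(3)
  show "\<forall>(i, j) \<in> T. S n i j \<in> Bgrp n T" using S_Bgrp[OF TP rc] by blast
  show "\<forall>i \<in> {1..2*n}. \<forall>v \<in> carrier_vec (2*n). (\<forall>k \<in> {1..2*n}. v $ (k - 1) \<noteq> 0 \<longrightarrow> (k, i) \<in> T)
      \<longrightarrow> Sv n v i \<in> Bgrp n T"
    using Sv_Bgrp[OF TP rc] by blast
  show "gen_group (2*n) (Gens n T) = Bgrp n T" using gen_group_eq_Bgrp[OF TP tr rc] .
  show "\<forall>B \<in> Bgrp n T. B = prodm (2*n) (map (\<lambda>j. Sv n (V n B *\<^sub>v ev n j) j) [1..<n+1])
      \<and> (\<forall>j \<in> {1..n}. Sv n (V n B *\<^sub>v ev n j) j \<in> Bgrp n T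
           \<and> (\<exists>gs. set gs \<subseteq> Gens n T \<and> Sv n (V n B *\<^sub>v ev n j) j = prodm (2*n) gs))"
  proof (intro ballI conjI)
    fix B j assume B: "B \<in> Bgrp n T" and j: "j \<in> {1..n}"
    have v: "supported_on_Gens n T j (V n B *\<^sub>v ev n j)" using V_col_supported_on_Gens[OF TP B j] .
    show "Sv n (V n B *\<^sub>v ev n j) j \<in> Bgrp n T" using supported_on_Gens_Sv_Bgrp[OF TP rc j v] .
    show "\<exists>gs. set gs \<subseteq> Gens n T \<and> Sv n (V n B *\<^sub>v ev n j) j = prodm (2*n) gs"
      using Sv_gen_prods[OF tr rc j v] unfolding gen_prods_def by blast
  qed (rule Bgrp_factorization[OF TP tr rc])
qed

end
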